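(* Let $X$, $Y$, $Z$ be positive, absolutely continuous random variables with densities $f_X$, $f_Y$, $f_Z$, such that $X$ and $Y$ are independent and $Z \stackrel{d}{=} X/(X+Y)$ (so $Z$ takes values in $(0,1)$). Suppose that the density of $Y$ admits the decomposition $$f_Y(sx)=\mathbb{A}(s)\,\mathbb{B}(x)\,\mathbb{C}(sx),\qquad x,s>0,$$ for some positive real-valued functions $\mathbb{A},\mathbb{B},\mathbb{C}$ on $(0,\infty)$, where $$\mathbb{C}(x)=\exp(-\lambda x^\theta),\qquad x>0,$$ for some constants $\lambda,\theta>0$. Then the density of $X$ is given, for $x>0$, by $$f_X(x)=\frac{\lambda\theta}{x^{2-\theta}\,\mathbb{B}(x)}\;\mathcal{L}^{-1}\left\{\frac{1}{\mathbb{A}(s^{1/\theta})\,(s^{1/\theta}+1)^2}\, f_Z\!\left(\frac{1}{s^{1/\theta}+1}\right)\right\}(\lambda x^\theta).$$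
   Context: $\mathcal{L}$ denotes the Laplace transform, $\mathcal{L}\{g\}(s)=\int_0^\infty e^{-st}g(t)\,\mathrm{d}t$, and $\mathcal{L}^{-1}$ denotes the inverse Laplace transform: $\mathcal{L}^{-1}\{F\}$ is the function $g$ on $(0,\infty)$ with $\mathcal{L}\{g\}=F$; the expression $\mathcal{L}^{-1}\{F\}(t)$ means this function evaluated at $t$. The notation $\stackrel{d}{=}$ means equality in distribution. *)

theory Defs
  imports "HOL-Probability.Probability"
begin

definition laplace_transform :: "(real \<Rightarrow> real) \<Rightarrow> real \<Rightarrow> real" where
  "laplace_transform g s = (LINT t:{0<..}|lborel. exp (- s * t) * g t)"

definition has_laplace_at :: "(real \<Rightarrow> real) \<Rightarrow> real \<Rightarrow> real \<Rightarrow> bool" where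
  "has_laplace_at g s v \<longleftrightarrow>
     set_integrable lborel {0<..} (\<lambda>t. exp (- s * t) * g t) \<and> laplace_transform g s = v"

text \<open>g is an inverse Laplace transform of F: L{g} = F on (0,infinity)
  (almost everywhere, as F is built from a density defined only up to null sets).\<close>
definition is_inverse_laplace :: "(real \<Rightarrow> real) \<Rightarrow> (real \<Rightarrow> real) \<Rightarrow> bool" where
  "is_inverse_laplace g F \<longleftrightarrow> (AE s in lborel. s > 0 \<longrightarrow> has_laplace_at g s (F s))"

end

(*
  Put T = Y / X. Since Z has the law of X / (X + Y) = 1 / (1 + T), the density of T on (0, oo)
  is fZ (1 / (1 + t)) / (1 + t)^2; by independence it is also the integral over x > 0 of
  x fX(x) fY(t x). Inserting fY(t x) = A(t) B(x) exp(-lam t^theta x^theta) and substituting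
  u = lam x^theta turns the latter into A(t) times the Laplace transform at s = t^theta of
    g(u) = x^(2 - theta) fX(x) B(x) / (lam theta),   where x = (u / lam)^(1 / theta).
  Equating the two expressions for the density of T identifies the Laplace transform of g,
  and solving the definition of g for fX gives the formula for the density of X.
*)
theory Submission
  imports Defs
begin

lemma UN_atLeastAtMost_inverse_Suc: "(\<Union>n. {1 / real (Suc n)..real (Suc n)}) = {0<..}"
proof (intro subset_antisym subsetI)
  fix x :: real assume "x \<in> {0<..}"
  moreover obtain n where "max x (1 / x) < real n"
    using reals_Archimedean2 by blast
  ultimately have "x \<in> {1 / real (Suc n)..real (Suc n)}"
    by (auto simp: field_simps)
  then show "x \<in> (\<Union>n. {1 / real (Suc n)..real (Suc n)})" by blast
qed (auto intro: less_le_trans[of 0 "1 / real (Suc _)"])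

lemma incseq_atLeastAtMost_inverse_Suc: "incseq (\<lambda>n. {1 / real (Suc n)..real (Suc n)})"
  by (rule incseq_SucI) (auto simp: frac_le intro: order_trans)

lemma image_atLeastAtMost_continuous_mono:
  fixes g :: "real \<Rightarrow> real"
  assumes "a \<le> b" and "continuous_on {a..b} g" and "mono_on {a..b} g"
  shows "g ` {a..b} = {g a..g b}"
proof
  show "g ` {a..b} \<subseteq> {g a..g b}"
    using \<open>a \<le> b\<close> by (auto intro!: mono_onD[OF \<open>mono_on {a..b} g\<close>])
  show "{g a..g b} \<subseteq> g ` {a..b}"
    using IVT'[of g a _ b] assms(1,2) by fastforce
qed

lemma nn_integral_substitution_positive:
  fixes f g g' :: "real \<Rightarrow> real"
  assumes [measurable]: "f \<in> borel_measurable borel" "g \<in> borel_measurable borel"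
      "g' \<in> borel_measurable borel"
    and deriv: "\<And>x. x > 0 \<Longrightarrow> (g has_real_derivative g' x) (at x)"
    and cont: "continuous_on {0<..} g'"
    and nonneg: "\<And>x. x > 0 \<Longrightarrow> g' x \<ge> 0"
    and image: "g ` {0<..} = T"
  shows "(\<integral>\<^sup>+x. f x * indicator T x \<partial>lborel) = (\<integral>\<^sup>+x. f (g x) * g' x * indicator {0<..} x \<partial>lborel)"
proof -
  (* Exhaust (0, oo) by the intervals [1/(n+1), n+1], on which the library's substitution rule
     applies, and pass to the limit by continuity of measures from below. *)
  define a :: "nat \<Rightarrow> real" where "a n = 1 / real (Suc n)" for n
  define b :: "nat \<Rightarrow> real" where "b n = real (Suc n)" for n
  have a_pos: "0 < a n" and a_le_b: "a n \<le> b n" for n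
    by (auto simp: a_def b_def field_simps)
  have interval_pos: "{a n..b n} \<subseteq> {0<..}" for n
    using a_pos[of n] by auto
  have union: "(\<Union>n. {a n..b n}) = {0<..}" and incseq: "incseq (\<lambda>n. {a n..b n})"
    unfolding a_def b_def by (fact UN_atLeastAtMost_inverse_Suc incseq_atLeastAtMost_inverse_Suc)+
  have g_mono: "mono_on {0<..} g"
    using deriv_nonneg_imp_mono[of _ _ g g'] deriv nonneg by (intro mono_onI) simp
  have g_cont: "continuous_on {0<..} g"
    using deriv by (meson DERIV_isCont continuous_at_imp_continuous_on greaterThan_iff)
  have image_interval: "g ` {a n..b n} = {g (a n)..g (b n)}" for n
    using a_le_b interval_pos
    by (intro image_atLeastAtMost_continuous_mono continuous_on_subset[OF g_cont] mono_on_subset[OF g_mono])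
  have T_union: "T = (\<Union>n. g ` {a n..b n})"
    unfolding image[symmetric] union[symmetric] by (rule image_UN)
  have incseq_image: "incseq (\<lambda>n. g ` {a n..b n})"
    using incseq by (simp add: incseq_def image_mono)
  let ?F = "density lborel (\<lambda>x. ennreal (f x))"
  let ?G = "density lborel (\<lambda>x. ennreal (f (g x) * g' x))"
  have F: "emeasure ?F S = (\<integral>\<^sup>+x. f x * indicator S x \<partial>lborel)" if "S \<in> sets borel" for S
    using that by (subst emeasure_density) (auto intro!: nn_integral_cong split: split_indicator)
  have G: "emeasure ?G S = (\<integral>\<^sup>+x. f (g x) * g' x * indicator S x \<partial>lborel)" if "S \<in> sets borel" for S
    using that by (subst emeasure_density) (auto intro!: nn_integral_cong split: split_indicator)
  have substitution: "emeasure ?F (g ` {a n..b n}) = emeasure ?G {a n..b n}" for n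
  proof -
    have "emeasure ?F (g ` {a n..b n}) = (\<integral>\<^sup>+x. f x * indicator {g (a n)..g (b n)} x \<partial>lborel)"
      using F image_interval by simp
    also have "\<dots> = (\<integral>\<^sup>+x. f (g x) * g' x * indicator {a n..b n} x \<partial>lborel)"
      using a_le_b[of n] interval_pos[of n]
      by (intro nn_integral_substitution deriv nonneg continuous_on_subset[OF cont])
        (auto simp: set_borel_measurable_def)
    also have "\<dots> = emeasure ?G {a n..b n}"
      using G by simp
    finally show ?thesis .
  qed
  have "(\<integral>\<^sup>+x. f x * indicator T x \<partial>lborel) = emeasure ?F (\<Union>n. g ` {a n..b n})"
    using F T_union image_interval by simp
  also have "\<dots> = (SUP n. emeasure ?F (g ` {a n..b n}))"
    by (intro SUP_emeasure_incseq[symmetric] incseq_image) (auto simp: image_interval)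
  also have "\<dots> = emeasure ?G (\<Union>n. {a n..b n})"
    unfolding substitution using incseq by (intro SUP_emeasure_incseq) auto
  also have "\<dots> = (\<integral>\<^sup>+x. f (g x) * g' x * indicator {0<..} x \<partial>lborel)"
    using G union by simp
  finally show ?thesis .
qed

lemma nn_integral_powr_substitution:
  fixes f :: "real \<Rightarrow> real" and c a :: real
  assumes [measurable]: "f \<in> borel_measurable borel" and c: "c > 0" and a: "a > 0"
  shows "(\<integral>\<^sup>+u. f u * indicator {0<..} u \<partial>lborel) =
    (\<integral>\<^sup>+x. f (c * x powr a) * (c * a * x powr (a - 1)) * indicator {0<..} x \<partial>lborel)"
proof (rule nn_integral_substitution_positive)
  show "((\<lambda>x. c * x powr a) has_real_derivative c * a * x powr (a - 1)) (at x)" if "x > 0" for x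
    using DERIV_cmult[OF has_real_derivative_powr[OF that], of c a] by (simp add: mult.assoc)
  show "continuous_on {0<..} (\<lambda>x. c * a * x powr (a - 1))"
    by (intro continuous_intros) auto
  show "(\<lambda>x. c * x powr a) ` {0<..} = {0<..}"
  proof (intro subset_antisym subsetI)
    fix y :: real assume "y \<in> {0<..}"
    then have "y = c * ((y / c) powr (1 / a)) powr a" "(y / c) powr (1 / a) > 0"
      using c a by (auto simp: powr_powr)
    then show "y \<in> (\<lambda>x. c * x powr a) ` {0<..}" by blast
  qed (use c in auto)
qed (use c a in auto)

lemma AE_powr_preimage:
  fixes a :: real
  assumes "AE t in lborel. P t" and a: "a > 0"
  shows "AE s in lborel. s > 0 \<longrightarrow> P (s powr a)"
proof -
  obtain N where N: "{t. \<not> P t} \<subseteq> N" "emeasure lborel N = 0" and [measurable]: "N \<in> sets borel"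
    using assms(1) by (auto elim!: AE_E)
  have "(\<integral>\<^sup>+s. indicator N (s powr a) * (a * s powr (a - 1)) * indicator {0<..} s \<partial>lborel) =
      (\<integral>\<^sup>+u. ennreal (indicator N u * indicator {0<..} u) \<partial>lborel)"
    by (subst nn_integral_powr_substitution[of "indicator N" 1 a]) (use a in auto)
  also have "\<dots> \<le> (\<integral>\<^sup>+u. indicator N u \<partial>lborel)"
    by (intro nn_integral_mono) (auto split: split_indicator)
  also have "\<dots> = 0" using N by auto
  finally have "AE s in lborel. ennreal (indicator N (s powr a) * (a * s powr (a - 1)) * indicator {0<..} s) = 0"
    by (subst nn_integral_0_iff_AE[symmetric]) auto
  then show ?thesis
  proof eventually_elim
    case (elim s)
    show ?case
    proof
      assume "s > 0"
      then have "a * s powr (a - 1) > 0" using a by simp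
      then have "s powr a \<notin> N" using elim \<open>s > 0\<close> by (auto simp: indicator_def)
      then show "P (s powr a)" using N(1) by blast
    qed
  qed
qed

lemma nn_integral_unit_interval_substitution:
  fixes h :: "real \<Rightarrow> real"
  assumes [measurable]: "h \<in> borel_measurable borel"
  shows "(\<integral>\<^sup>+w. h w * indicator {0<..<1} w \<partial>lborel) =
    (\<integral>\<^sup>+t. h (1 / (t + 1)) / (t + 1)\<^sup>2 * indicator {0<..} t \<partial>lborel)"
proof -
  (* Reflect to (-1, 0), so that the substitution t \<mapsto> -1 / (t + 1) is increasing. *)
  have "(\<integral>\<^sup>+w. h w * indicator {0<..<1} w \<partial>lborel) =
      (\<integral>\<^sup>+y. h (- y) * indicator {-1<..<0} y \<partial>lborel)"
    by (subst nn_integral_real_affine[where c = "-1" and t = 0])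
      (auto intro!: nn_integral_cong split: split_indicator)
  also have "\<dots> = (\<integral>\<^sup>+t. h (- (- 1 / (t + 1))) * (1 / (t + 1)\<^sup>2) * indicator {0<..} t \<partial>lborel)"
  proof (rule nn_integral_substitution_positive)
    show "((\<lambda>t. - 1 / (t + 1)) has_real_derivative 1 / (t + 1)\<^sup>2) (at t)" if "t > 0" for t :: real
      using that by (auto intro!: derivative_eq_intros simp: power2_eq_square)
    show "continuous_on {0<..} (\<lambda>t::real. 1 / (t + 1)\<^sup>2)"
      by (intro continuous_intros) auto
    show "(\<lambda>t::real. - 1 / (t + 1)) ` {0<..} = {-1<..<0}"
    proof (intro subset_antisym subsetI)
      fix y :: real assume "y \<in> {-1<..<0}"
      then have "y = - 1 / ((- 1 / y - 1) + 1)" "- 1 / y - 1 > 0"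
        by (auto simp: field_simps)
      then show "y \<in> (\<lambda>t. - 1 / (t + 1)) ` {0<..}" by fastforce
    qed (auto simp: field_simps)
  qed auto
  finally show ?thesis
    by simp
qed

lemma has_laplace_at_nn_integral:
  fixes G :: "real \<Rightarrow> real"
  assumes [measurable]: "G \<in> borel_measurable borel"
    and G_nonneg: "\<And>u. G u \<ge> 0" and "V \<ge> 0"
    and laplace: "(\<integral>\<^sup>+u. exp (- s * u) * G u * indicator {0<..} u \<partial>lborel) = ennreal V"
  shows "has_laplace_at G s V"
proof -
  have "(\<integral>\<^sup>+u. ennreal (indicator {0<..} u *\<^sub>R (exp (- s * u) * G u)) \<partial>lborel) = ennreal V"
    using laplace by (simp add: mult.commute)
  then have "integrable lborel (\<lambda>u. indicator {0<..} u *\<^sub>R (exp (- s * u) * G u)) \<and>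
      integral\<^sup>L lborel (\<lambda>u. indicator {0<..} u *\<^sub>R (exp (- s * u) * G u)) = V"
    using G_nonneg \<open>V \<ge> 0\<close> by (intro nn_integral_eq_integrable[THEN iffD1]) auto
  then show ?thesis
    unfolding has_laplace_at_def laplace_transform_def set_integrable_def set_lebesgue_integral_def
    by simp
qed

lemma (in prob_space) indep_var_lborel:
  fixes X Y :: "'a \<Rightarrow> real"
  assumes "indep_var borel X borel Y"
  shows "indep_var lborel X lborel Y"
proof -
  have [measurable]: "random_variable borel X" "random_variable borel Y"
    and "distr M borel X \<Otimes>\<^sub>M distr M borel Y = distr M (borel \<Otimes>\<^sub>M borel) (\<lambda>\<omega>. (X \<omega>, Y \<omega>))"
    using assms unfolding indep_var_distribution_eq by auto
  moreover have "distr M lborel X = distr M borel X" "distr M lborel Y = distr M borel Y"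
    by (auto intro: distr_cong)
  moreover have "distr M (lborel \<Otimes>\<^sub>M lborel) (\<lambda>\<omega>. (X \<omega>, Y \<omega>)) = distr M (borel \<Otimes>\<^sub>M borel) (\<lambda>\<omega>. (X \<omega>, Y \<omega>))"
    by (auto intro!: distr_cong sets_pair_measure_cong)
  ultimately show ?thesis
    unfolding indep_var_distribution_eq by simp
qed

lemma distributed_lborelI:
  fixes R :: "'a \<Rightarrow> real" and \<rho> :: "real \<Rightarrow> ennreal"
  assumes [measurable]: "R \<in> borel_measurable M" "\<rho> \<in> borel_measurable borel"
    and law: "\<And>E. E \<in> sets borel \<Longrightarrow>
      (\<integral>\<^sup>+\<omega>. indicator E (R \<omega>) \<partial>M) = (\<integral>\<^sup>+t. \<rho> t * indicator E t \<partial>lborel)"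
  shows "distributed M lborel R \<rho>"
proof -
  have "distr M lborel R = density lborel \<rho>"
  proof (rule measure_eqI)
    fix E assume "E \<in> sets (distr M lborel R)"
    then have [measurable]: "E \<in> sets borel" by simp
    have "emeasure (distr M lborel R) E = (\<integral>\<^sup>+y. indicator E y \<partial>distr M lborel R)"
      by (rule nn_integral_indicator[symmetric]) simp
    also have "\<dots> = (\<integral>\<^sup>+\<omega>. indicator E (R \<omega>) \<partial>M)"
      by (rule nn_integral_distr) simp_all
    also have "\<dots> = emeasure (density lborel \<rho>) E"
      by (simp add: law emeasure_density)
    finally show "emeasure (distr M lborel R) E = emeasure (density lborel \<rho>) E" .
  qed simp
  then show ?thesis
    unfolding distributed_def by simp
qed

lemma distributed_ratio:
  fixes X Y :: "'a \<Rightarrow> real" and f :: "real \<times> real \<Rightarrow> ennreal"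
  assumes joint: "distributed M (lborel \<Otimes>\<^sub>M lborel) (\<lambda>\<omega>. (X \<omega>, Y \<omega>)) f"
    and X_pos: "AE \<omega> in M. X \<omega> > 0"
  shows "distributed M lborel (\<lambda>\<omega>. Y \<omega> / X \<omega>)
    (\<lambda>t. \<integral>\<^sup>+x. ennreal x * f (x, t * x) * indicator {0<..} x \<partial>lborel)"
proof (rule distributed_lborelI)
  have [measurable]: "X \<in> borel_measurable M" "Y \<in> borel_measurable M"
    using distributed_measurable[OF joint] by (auto simp: measurable_pair_iff comp_def)
  have [measurable]: "f \<in> borel_measurable (lborel \<Otimes>\<^sub>M lborel)"
    using distributed_borel_measurable[OF joint] .
  show "(\<lambda>\<omega>. Y \<omega> / X \<omega>) \<in> borel_measurable M"
    and "(\<lambda>t. \<integral>\<^sup>+x. ennreal x * f (x, t * x) * indicator {0<..} x \<partial>lborel) \<in> borel_measurable borel"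
    by measurable
  fix E :: "real set" assume [measurable]: "E \<in> sets borel"
  define K :: "real \<times> real \<Rightarrow> ennreal"
    where "K p = indicator E (snd p / fst p) * indicator {0<..} (fst p)" for p
  have scale: "(\<integral>\<^sup>+y. f (x, y) * K (x, y) \<partial>lborel) =
      (\<integral>\<^sup>+t. ennreal x * f (x, t * x) * indicator {0<..} x * indicator E t \<partial>lborel)" for x
  proof (cases "x > 0")
    case True
    then have "(\<integral>\<^sup>+y. f (x, y) * K (x, y) \<partial>lborel) =
        ennreal x * (\<integral>\<^sup>+t. f (x, 0 + x * t) * K (x, 0 + x * t) \<partial>lborel)"
      by (subst nn_integral_real_affine[where c = x and t = 0]) (auto simp: K_def)
    also have "\<dots> = (\<integral>\<^sup>+t. ennreal x * f (x, t * x) * indicator {0<..} x * indicator E t \<partial>lborel)"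
      using True by (subst nn_integral_cmult[symmetric])
        (auto simp: K_def mult.commute mult.left_commute intro!: nn_integral_cong)
    finally show ?thesis .
  qed (simp add: K_def)
  have "(\<integral>\<^sup>+\<omega>. indicator E (Y \<omega> / X \<omega>) \<partial>M) = (\<integral>\<^sup>+\<omega>. K (X \<omega>, Y \<omega>) \<partial>M)"
    using X_pos by (intro nn_integral_cong_AE) (auto simp: K_def)
  also have "\<dots> = (\<integral>\<^sup>+p. f p * K p \<partial>(lborel \<Otimes>\<^sub>M lborel))"
    by (rule distributed_nn_integral[OF joint, symmetric]) (simp add: K_def)
  also have "\<dots> = (\<integral>\<^sup>+x. \<integral>\<^sup>+y. f (x, y) * K (x, y) \<partial>lborel \<partial>lborel)"
    by (subst lborel.nn_integral_fst[symmetric]) (auto simp: K_def case_prod_beta)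
  also have "\<dots> = (\<integral>\<^sup>+x. \<integral>\<^sup>+t. ennreal x * f (x, t * x) * indicator {0<..} x * indicator E t
      \<partial>lborel \<partial>lborel)"
    by (simp add: scale)
  also have "\<dots> = (\<integral>\<^sup>+t. \<integral>\<^sup>+x. ennreal x * f (x, t * x) * indicator {0<..} x * indicator E t
      \<partial>lborel \<partial>lborel)"
    by (rule lborel_pair.Fubini') measurable
  also have "\<dots> = (\<integral>\<^sup>+t. (\<integral>\<^sup>+x. ennreal x * f (x, t * x) * indicator {0<..} x \<partial>lborel)
      * indicator E t \<partial>lborel)"
    by (simp add: nn_integral_multc)
  finally show "(\<integral>\<^sup>+\<omega>. indicator E (Y \<omega> / X \<omega>) \<partial>M) = (\<integral>\<^sup>+t. (\<integral>\<^sup>+x. ennreal x * f (x, t * x)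
      * indicator {0<..} x \<partial>lborel) * indicator E t \<partial>lborel)" .
qed

lemma distributed_inverse_minus_one:
  fixes W :: "'a \<Rightarrow> real" and f :: "real \<Rightarrow> real"
  assumes dens: "distributed M lborel W (\<lambda>w. ennreal (f w))"
    and f_nonneg: "\<And>w. f w \<ge> 0"
    and W_range: "AE \<omega> in M. 0 < W \<omega> \<and> W \<omega> < 1"
  shows "distributed M lborel (\<lambda>\<omega>. 1 / W \<omega> - 1)
    (\<lambda>t. ennreal (f (1 / (t + 1)) / (t + 1)\<^sup>2 * indicator {0<..} t))"
proof (rule distributed_lborelI)
  have [measurable]: "W \<in> borel_measurable M"
    using distributed_measurable[OF dens] by simp
  have [measurable]: "f \<in> borel_measurable borel"
    using distributed_real_measurable[OF _ dens] f_nonneg by simp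
  show "(\<lambda>\<omega>. 1 / W \<omega> - 1) \<in> borel_measurable M"
    and "(\<lambda>t. ennreal (f (1 / (t + 1)) / (t + 1)\<^sup>2 * indicator {0<..} t)) \<in> borel_measurable borel"
    by measurable
  fix E :: "real set" assume [measurable]: "E \<in> sets borel"
  have "(\<integral>\<^sup>+\<omega>. indicator E (1 / W \<omega> - 1) \<partial>M) =
      (\<integral>\<^sup>+\<omega>. indicator E (1 / W \<omega> - 1) * indicator {0<..<1} (W \<omega>) \<partial>M)"
    using W_range by (intro nn_integral_cong_AE) auto
  also have "\<dots> = (\<integral>\<^sup>+w. ennreal (f w) * (indicator E (1 / w - 1) * indicator {0<..<1} w) \<partial>lborel)"
    by (rule distributed_nn_integral[OF dens, symmetric]) simp
  also have "\<dots> = (\<integral>\<^sup>+w. f w * indicator E (1 / w - 1) * indicator {0<..<1} w \<partial>lborel)"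
    by (intro nn_integral_cong) (auto split: split_indicator)
  also have "\<dots> = (\<integral>\<^sup>+t. f (1 / (t + 1)) * indicator E (1 / (1 / (t + 1)) - 1) / (t + 1)\<^sup>2
      * indicator {0<..} t \<partial>lborel)"
    by (rule nn_integral_unit_interval_substitution) simp
  also have "\<dots> = (\<integral>\<^sup>+t. ennreal (f (1 / (t + 1)) / (t + 1)\<^sup>2 * indicator {0<..} t) * indicator E t
      \<partial>lborel)"
    by (intro nn_integral_cong) (auto split: split_indicator)
  finally show "(\<integral>\<^sup>+\<omega>. indicator E (1 / W \<omega> - 1) \<partial>M) = (\<integral>\<^sup>+t. ennreal (f (1 / (t + 1)) / (t + 1)\<^sup>2
      * indicator {0<..} t) * indicator E t \<partial>lborel)" .
qed

lemma (in prob_space) indep_ratio_density_eq_proportion_density: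
  fixes X Y Z :: "'a \<Rightarrow> real" and fX fY fZ :: "real \<Rightarrow> real"
  assumes indep: "indep_var borel X borel Y"
    and densX: "distributed M lborel X (\<lambda>x. ennreal (fX x))"
    and densY: "distributed M lborel Y (\<lambda>y. ennreal (fY y))"
    and densZ: "distributed M lborel Z (\<lambda>z. ennreal (fZ z))"
    and Z_eq: "distr M borel Z = distr M borel (\<lambda>\<omega>. X \<omega> / (X \<omega> + Y \<omega>))"
    and fX_nonneg: "\<And>x. fX x \<ge> 0" and fY_nonneg: "\<And>y. fY y \<ge> 0" and fZ_nonneg: "\<And>z. fZ z \<ge> 0"
    and X_pos: "AE \<omega> in M. X \<omega> > 0" and Y_pos: "AE \<omega> in M. Y \<omega> > 0"
  shows "AE t in lborel. t > 0 \<longrightarrow>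
    (\<integral>\<^sup>+x. ennreal (x * fX x * fY (t * x)) * indicator {0<..} x \<partial>lborel) = ennreal (fZ (1 / (t + 1)) / (t + 1)\<^sup>2)"
proof -
  have [measurable]: "X \<in> borel_measurable M" "Y \<in> borel_measurable M"
    using distributed_measurable[OF densX] distributed_measurable[OF densY] by simp_all
  have densW: "distributed M lborel (\<lambda>\<omega>. X \<omega> / (X \<omega> + Y \<omega>)) (\<lambda>w. ennreal (fZ w))"
    using densZ Z_eq unfolding distributed_def by (simp add: distr_cong[OF refl sets_lborel])
  have joint: "distributed M (lborel \<Otimes>\<^sub>M lborel) (\<lambda>\<omega>. (X \<omega>, Y \<omega>))
      (\<lambda>(x, y). ennreal (fX x) * ennreal (fY y))"
    by (rule distributed_joint_indep[OF lborel.sigma_finite_measure_axioms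
          lborel.sigma_finite_measure_axioms densX densY indep_var_lborel[OF indep]])
  have ratio: "distributed M lborel (\<lambda>\<omega>. Y \<omega> / X \<omega>)
      (\<lambda>t. \<integral>\<^sup>+x. ennreal x * (ennreal (fX x) * ennreal (fY (t * x))) * indicator {0<..} x \<partial>lborel)"
    using distributed_ratio[OF joint X_pos] by simp
  have "AE \<omega> in M. 0 < X \<omega> / (X \<omega> + Y \<omega>) \<and> X \<omega> / (X \<omega> + Y \<omega>) < 1"
    using X_pos Y_pos by eventually_elim simp
  note inverse_minus_one = distributed_inverse_minus_one[OF densW fZ_nonneg this]
  have "distr M lborel (\<lambda>\<omega>. 1 / (X \<omega> / (X \<omega> + Y \<omega>)) - 1) =
      distr M lborel (\<lambda>\<omega>. Y \<omega> / X \<omega>)"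
    using X_pos Y_pos by (intro distr_cong_AE) (auto simp: field_simps elim!: eventually_mono)
  with inverse_minus_one have "distributed M lborel (\<lambda>\<omega>. Y \<omega> / X \<omega>)
      (\<lambda>t. ennreal (fZ (1 / (t + 1)) / (t + 1)\<^sup>2 * indicator {0<..} t))"
    unfolding distributed_def by simp
  with ratio have "AE t in lborel.
      (\<integral>\<^sup>+x. ennreal x * (ennreal (fX x) * ennreal (fY (t * x))) * indicator {0<..} x \<partial>lborel) =
      ennreal (fZ (1 / (t + 1)) / (t + 1)\<^sup>2 * indicator {0<..} t)"
    by (rule distributed_unique)
  then show ?thesis
  proof eventually_elim
    case (elim t)
    have "(\<integral>\<^sup>+x. ennreal (x * fX x * fY (t * x)) * indicator {0<..} x \<partial>lborel) =
        (\<integral>\<^sup>+x. ennreal x * (ennreal (fX x) * ennreal (fY (t * x))) * indicator {0<..} x \<partial>lborel)"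
      by (intro nn_integral_cong) (auto simp: ennreal_mult fX_nonneg fY_nonneg mult.assoc split: split_indicator)
    with elim show ?case by simp
  qed
qed

lemma ratio_density_eq_laplace:
  fixes fX fY A B G :: "real \<Rightarrow> real" and lam \<theta> t :: real
  assumes [measurable]: "fX \<in> borel_measurable borel" "fY \<in> borel_measurable borel"
      "G \<in> borel_measurable borel"
    and G_eq: "\<And>x. x > 0 \<Longrightarrow> G (lam * x powr \<theta>) = x powr (2 - \<theta>) * fX x * B x / (lam * \<theta>)"
    and fY_eq: "\<And>x. x > 0 \<Longrightarrow> fY (t * x) = A t * B x * exp (- lam * (t * x) powr \<theta>)"
    and A: "A t > 0" and t: "t > 0" and lam: "lam > 0" and \<theta>: "\<theta> > 0"
  shows "(\<integral>\<^sup>+x. ennreal (x * fX x * fY (t * x)) * indicator {0<..} x \<partial>lborel) =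
    ennreal (A t) * (\<integral>\<^sup>+u. exp (- (t powr \<theta>) * u) * G u * indicator {0<..} u \<partial>lborel)"
proof -
  have pointwise: "exp (- (t powr \<theta>) * (lam * x powr \<theta>)) * G (lam * x powr \<theta>) * (lam * \<theta> * x powr (\<theta> - 1))
      = x * fX x * fY (t * x) / A t" if x: "x > 0" for x
  proof -
    have "x powr (2 - \<theta>) * x powr (\<theta> - 1) = x"
      using x by (simp add: powr_add[symmetric])
    moreover have "(t * x) powr \<theta> = t powr \<theta> * x powr \<theta>"
      using x t by (simp add: powr_mult)
    ultimately show ?thesis
      using x A lam \<theta> by (simp add: G_eq fY_eq field_simps)
  qed
  have "ennreal (A t) * (\<integral>\<^sup>+u. exp (- (t powr \<theta>) * u) * G u * indicator {0<..} u \<partial>lborel) =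
      ennreal (A t) * (\<integral>\<^sup>+x. exp (- (t powr \<theta>) * (lam * x powr \<theta>)) * G (lam * x powr \<theta>)
        * (lam * \<theta> * x powr (\<theta> - 1)) * indicator {0<..} x \<partial>lborel)"
    using lam \<theta> by (subst nn_integral_powr_substitution[where c = lam and a = \<theta>]) auto
  also have "\<dots> = ennreal (A t) * (\<integral>\<^sup>+x. ennreal (x * fX x * fY (t * x) / A t) * indicator {0<..} x \<partial>lborel)"
    using pointwise by (intro arg_cong2[where f = "(*)"] nn_integral_cong refl) (auto split: split_indicator)
  also have "\<dots> = (\<integral>\<^sup>+x. ennreal (x * fX x * fY (t * x)) * indicator {0<..} x \<partial>lborel)"
    using A by (subst nn_integral_cmult[symmetric])
      (auto intro!: nn_integral_cong simp: ennreal_mult'[symmetric] split: split_indicator)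
  finally show ?thesis ..
qed

lemma has_laplace_at_powr_of_ratio_density:
  fixes fX fY A B G :: "real \<Rightarrow> real" and lam \<theta> t D :: real
  assumes meas[measurable]: "fX \<in> borel_measurable borel" "fY \<in> borel_measurable borel"
      "G \<in> borel_measurable borel"
    and G_nonneg: "\<And>u. G u \<ge> 0"
    and G_eq: "\<And>x. x > 0 \<Longrightarrow> G (lam * x powr \<theta>) = x powr (2 - \<theta>) * fX x * B x / (lam * \<theta>)"
    and fY_eq: "\<And>x. x > 0 \<Longrightarrow> fY (t * x) = A t * B x * exp (- lam * (t * x) powr \<theta>)"
    and A: "A t > 0" and t: "t > 0" and lam: "lam > 0" and \<theta>: "\<theta> > 0"
    and ratio_density: "(\<integral>\<^sup>+x. ennreal (x * fX x * fY (t * x)) * indicator {0<..} x \<partial>lborel) = ennreal D"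
    and "D \<ge> 0"
  shows "has_laplace_at G (t powr \<theta>) (D / A t)"
proof (rule has_laplace_at_nn_integral)
  have "ennreal (A t) * (\<integral>\<^sup>+u. exp (- (t powr \<theta>) * u) * G u * indicator {0<..} u \<partial>lborel) =
      ennreal (A t) * ennreal (D / A t)"
    using ratio_density_eq_laplace[where A = A and B = B, OF meas G_eq fY_eq A t lam \<theta>]
      ratio_density A
    by (simp add: ennreal_mult'[symmetric])
  then show "(\<integral>\<^sup>+u. exp (- (t powr \<theta>) * u) * G u * indicator {0<..} u \<partial>lborel) = ennreal (D / A t)"
    using A by (simp add: ennreal_mult_cancel_left)
qed (use G_nonneg A \<open>D \<ge> 0\<close> in auto)

lemma is_inverse_laplace_of_ratio_density:
  fixes fX fY fW A B G :: "real \<Rightarrow> real" and lam \<theta> :: real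
  assumes meas[measurable]: "fX \<in> borel_measurable borel" "fY \<in> borel_measurable borel"
      "G \<in> borel_measurable borel"
    and G_nonneg: "\<And>u. G u \<ge> 0"
    and fW_nonneg: "\<And>w. fW w \<ge> 0"
    and G_eq: "\<And>x. x > 0 \<Longrightarrow> G (lam * x powr \<theta>) = x powr (2 - \<theta>) * fX x * B x / (lam * \<theta>)"
    and fY_eq: "\<And>s x. s > 0 \<Longrightarrow> x > 0 \<Longrightarrow> fY (s * x) = A s * B x * exp (- lam * (s * x) powr \<theta>)"
    and A_pos: "\<And>s. s > 0 \<Longrightarrow> A s > 0" and lam: "lam > 0" and \<theta>: "\<theta> > 0"
    and ratio_density: "AE t in lborel. t > 0 \<longrightarrow>
      (\<integral>\<^sup>+x. ennreal (x * fX x * fY (t * x)) * indicator {0<..} x \<partial>lborel) = ennreal (fW (1 / (t + 1)) / (t + 1)\<^sup>2)"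
  shows "is_inverse_laplace G
    (\<lambda>s. 1 / (A (s powr (1 / \<theta>)) * (s powr (1 / \<theta>) + 1)\<^sup>2) * fW (1 / (s powr (1 / \<theta>) + 1)))"
  unfolding is_inverse_laplace_def
  using AE_powr_preimage[OF ratio_density divide_pos_pos[OF zero_less_one \<theta>]]
proof eventually_elim
  case (elim s)
  show ?case
  proof
    assume s: "s > 0"
    define t where "t = s powr (1 / \<theta>)"
    have t: "t > 0" "t powr \<theta> = s"
      using s \<theta> by (auto simp: t_def powr_powr)
    have "(\<integral>\<^sup>+x. ennreal (x * fX x * fY (t * x)) * indicator {0<..} x \<partial>lborel) =
        ennreal (fW (1 / (t + 1)) / (t + 1)\<^sup>2)"
      using elim s t(1) by (simp add: t_def)
    then have "has_laplace_at G (t powr \<theta>) (fW (1 / (t + 1)) / (t + 1)\<^sup>2 / A t)"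
      by (intro has_laplace_at_powr_of_ratio_density[where A = A and B = B, OF meas G_nonneg G_eq
          fY_eq[OF t(1)] A_pos[OF t(1)] t(1) lam \<theta>])
        (auto intro: divide_nonneg_nonneg fW_nonneg)
    then show "has_laplace_at G s
        (1 / (A (s powr (1 / \<theta>)) * (s powr (1 / \<theta>) + 1)\<^sup>2) * fW (1 / (s powr (1 / \<theta>) + 1)))"
      unfolding t_def[symmetric] t(2) by (simp add: ac_simps)
  qed
qed

theorem theorem1:
  fixes M :: "'a measure"
    and X Y Z :: "'a \<Rightarrow> real"
    and fX fY fZ :: "real \<Rightarrow> real"
    and A B C :: "real \<Rightarrow> real"
    and lam \<theta> :: real
  assumes "prob_space M"
    and fX_nonneg: "\<And>x. fX x \<ge> 0" and fY_nonneg: "\<And>x. fY x \<ge> 0" and fZ_nonneg: "\<And>x. fZ x \<ge> 0"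
    and densX: "distributed M lborel X (\<lambda>x. ennreal (fX x))"
    and densY: "distributed M lborel Y (\<lambda>x. ennreal (fY x))"
    and densZ: "distributed M lborel Z (\<lambda>x. ennreal (fZ x))"
    and posX: "AE \<omega> in M. X \<omega> > 0"
    and posY: "AE \<omega> in M. Y \<omega> > 0"
    and posZ: "AE \<omega> in M. Z \<omega> > 0"
    and indep: "prob_space.indep_var M borel X borel Y"
    and Z_eq: "distr M borel Z = distr M borel (\<lambda>\<omega>. X \<omega> / (X \<omega> + Y \<omega>))"
    and A_pos: "\<And>x. x > 0 \<Longrightarrow> A x > 0"
    and B_pos: "\<And>x. x > 0 \<Longrightarrow> B x > 0"
    and C_pos: "\<And>x. x > 0 \<Longrightarrow> C x > 0"
    and decomp: "\<And>x s. x > 0 \<Longrightarrow> s > 0 \<Longrightarrow> fY (s * x) = A s * B x * C (s * x)"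
    and lam_pos: "lam > 0" and \<theta>_pos: "\<theta> > 0"
    and C_def: "\<And>x. x > 0 \<Longrightarrow> C x = exp (- lam * x powr \<theta>)"
  shows "\<exists>g. is_inverse_laplace g
               (\<lambda>s. 1 / (A (s powr (1 / \<theta>)) * (s powr (1 / \<theta>) + 1)\<^sup>2)
                     * fZ (1 / (s powr (1 / \<theta>) + 1)))
          \<and> (AE x in lborel. x > 0 \<longrightarrow>
               fX x = lam * \<theta> / (x powr (2 - \<theta>) * B x) * g (lam * x powr \<theta>))"
proof -
  interpret prob_space M by fact
  have fX_meas[measurable]: "fX \<in> borel_measurable borel"
    and fY_meas[measurable]: "fY \<in> borel_measurable borel"
    using distributed_real_measurable[OF _ densX] distributed_real_measurable[OF _ densY]
      fX_nonneg fY_nonneg by auto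
  have fY_eq: "fY (s * x) = A s * B x * exp (- lam * (s * x) powr \<theta>)" if "s > 0" "x > 0" for s x
    using decomp[OF that(2,1)] C_def[of "s * x"] that by simp
  have B_eq: "B x = fY x / (A 1 * exp (- lam * x powr \<theta>))" if "x > 0" for x
    using fY_eq[of 1 x] A_pos[of 1] that by simp
  (* B is not assumed measurable; on (0, oo) it is replaced by the expression in fY from B_eq. *)
  define g where "g u = (let x = (u / lam) powr (1 / \<theta>) in
    x powr (2 - \<theta>) * fX x * (fY x / (A 1 * exp (- lam * x powr \<theta>))) / (lam * \<theta>))" for u
  have g_meas[measurable]: "g \<in> borel_measurable borel"
    unfolding g_def Let_def by measurable
  have g_nonneg: "g u \<ge> 0" for u
    unfolding g_def Let_def using fX_nonneg fY_nonneg A_pos[of 1] lam_pos \<theta>_pos by simp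
  have g_eq: "g (lam * x powr \<theta>) = x powr (2 - \<theta>) * fX x * B x / (lam * \<theta>)" if "x > 0" for x
    using that lam_pos \<theta>_pos B_eq by (simp add: g_def powr_powr)
  note ratio_density = indep_ratio_density_eq_proportion_density[OF indep densX densY densZ Z_eq
      fX_nonneg fY_nonneg fZ_nonneg posX posY]
  have "is_inverse_laplace g (\<lambda>s. 1 / (A (s powr (1 / \<theta>)) * (s powr (1 / \<theta>) + 1)\<^sup>2)
      * fZ (1 / (s powr (1 / \<theta>) + 1)))"
    by (rule is_inverse_laplace_of_ratio_density[where A = A and B = B and fW = fZ, OF fX_meas fY_meas
          g_meas g_nonneg fZ_nonneg g_eq fY_eq A_pos lam_pos \<theta>_pos ratio_density])
      auto
  moreover have "fX x = lam * \<theta> / (x powr (2 - \<theta>) * B x) * g (lam * x powr \<theta>)" if "x > 0" for x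
    using B_pos[OF that] that lam_pos \<theta>_pos by (simp add: g_eq[OF that])
  ultimately show ?thesis
    by auto
qed

end
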